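(* For $j\ge 1$ and $1\le p\le n-1$, let $V_{j,p}$ be the subspace of $V^{\otimes n}$ spanned by the basis vectors $\mathbf i$ with $c_p(\mathbf i)\ge j$. If $\mathbf i$ is a basis vector lying in $V_{j,p}$, then $$T_p^{-1}\cdots T_{n-1}^{-1}S_{n-1}\cdots S_p(\mathbf i)\in \mathbf i+V_{j+1,p}.$$
   Context: Let $m,n\ge 1$ and $\mathbb K=\mathbb C(q,Q_1,\dots,Q_m)$, the field of rational functions in indeterminates $q,Q_1,\dots,Q_m$. Fix nonnegative integers $k_1,\dots,k_m,\ell_1,\dots,\ell_m$ with $N=\sum_{c=1}^m(k_c+\ell_c)>0$. Let $V$ be a $\mathbb K$-superspace with homogeneous basis $\{v^{(c)}_a:1\le c\le m,\ 1\le a\le k_c+\ell_c\}$, where $v^{(c)}_a$ is even if $a\le k_c$ and odd if $a>k_c$; $v^{(c)}_a$ has colour $c$. Totally order this basis by $v^{(c)}_a<v^{(c')}_b$ iff $c<c'$, or $c=c'$ and $a<b$, and write it as $u_1<\cdots<u_N$. Let $\bar j\in\{0,1\}$ be the parity of $u_j$ and $\mathrm{col}(j)$ its colour. For $\mathbf i=(i_1,\dots,i_n)\in\{1,\dots,N\}^n$ write also $\mathbf i$ for the basis vector $u_{i_1}\otimes\cdots\otimes u_{i_n}$ of $V^{\otimes n}$, put $c_t(\mathbf i)=\mathrm{col}(i_t)$, and let $\mathbf i s_a$ be $\mathbf i$ with entries $a,a+1$ interchanged. Linear operators on $V^{\otimes n}$ ($1\le a\le n-1$): $s_a(\mathbf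 i)=(-1)^{\bar i_a}\mathbf i$ if $i_a=i_{a+1}$, $s_a(\mathbf i)=(-1)^{\bar i_a\bar i_{a+1}}\mathbf i s_a$ otherwise; $T_a(\mathbf i)=(q-q^{-1})\mathbf i+(-1)^{\bar i_a\bar i_{a+1}}\mathbf i s_a$ if $i_a<i_{a+1}$; $T_a(\mathbf i)=\frac{(q-q^{-1})+(-1)^{\bar i_a}(q+q^{-1})}{2}\mathbf i$ if $i_a=i_{a+1}$; $T_a(\mathbf i)=(-1)^{\bar i_a\bar i_{a+1}}\mathbf i s_a$ if $i_a>i_{a+1}$ (each $T_a$ is invertible); $S_a(\mathbf i)=T_a(\mathbf i)$ if $c_a(\mathbf i)=c_{a+1}(\mathbf i)$, and $S_a(\mathbf i)=s_a(\mathbf i)$ otherwise. Products of operators denote composition. *)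

theory Defs
  imports "HOL-Computational_Algebra.Polynomial" "HOL-Computational_Algebra.Fraction_Field"
begin

text \<open>Ground field: K = C(q), rational functions in q (the parameters Q_c do not
  occur in the operators).\<close>
type_synonym K = "complex poly fract"

definition qq :: K where "qq = Fract [:0, 1:] 1"

text \<open>Vectors of V^{\<otimes>n}: coefficient functions on index tuples
  (lists of length n with entries in {1..N}).\<close>
type_synonym vec = "nat list \<Rightarrow> K"

definition dimN :: "nat \<Rightarrow> (nat \<Rightarrow> nat) \<Rightarrow> (nat \<Rightarrow> nat) \<Rightarrow> nat" where
  "dimN m k l = (\<Sum>c=1..m. k c + l c)"

text \<open>colour of the basis vector u_j (1 \<le> j \<le> N)\<close>
definition col :: "(nat \<Rightarrow> nat) \<Rightarrow> (nat \<Rightarrow> nat) \<Rightarrow> nat \<Rightarrow> nat" where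
  "col k l j = (LEAST c. j \<le> (\<Sum>c'=1..c. k c' + l c'))"

text \<open>parity of u_j: True iff u_j is odd, i.e. u_j = v^{(c)}_a with a > k_c\<close>
definition odd_par :: "(nat \<Rightarrow> nat) \<Rightarrow> (nat \<Rightarrow> nat) \<Rightarrow> nat \<Rightarrow> bool" where
  "odd_par k l j = (j - (\<Sum>c'=1..col k l j - 1. k c' + l c') > k (col k l j))"

definition tuples :: "nat \<Rightarrow> nat \<Rightarrow> nat list set" where
  "tuples N n = {i. length i = n \<and> (\<forall>x\<in>set i. 1 \<le> x \<and> x \<le> N)}"

definition vecs :: "nat \<Rightarrow> nat \<Rightarrow> vec set" where
  "vecs N n = {v. \<forall>i. i \<notin> tuples N n \<longrightarrow> v i = 0}"

definition bvec :: "nat list \<Rightarrow> vec" where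
  "bvec i = (\<lambda>j. if j = i then 1 else 0)"

text \<open>1-based entry access and swapping of entries a, a+1\<close>
definition ent :: "nat list \<Rightarrow> nat \<Rightarrow> nat" where
  "ent i t = i ! (t - 1)"

definition swp :: "nat list \<Rightarrow> nat \<Rightarrow> nat list" where
  "swp i a = i[a - 1 := i ! a, a := i ! (a - 1)]"

definition sgn_pp :: "(nat \<Rightarrow> nat) \<Rightarrow> (nat \<Rightarrow> nat) \<Rightarrow> nat \<Rightarrow> nat \<Rightarrow> K" where
  "sgn_pp k l x y = (if odd_par k l x \<and> odd_par k l y then -1 else 1)"

definition sgn_p :: "(nat \<Rightarrow> nat) \<Rightarrow> (nat \<Rightarrow> nat) \<Rightarrow> nat \<Rightarrow> K" where
  "sgn_p k l x = (if odd_par k l x then -1 else 1)"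

definition s_b :: "(nat \<Rightarrow> nat) \<Rightarrow> (nat \<Rightarrow> nat) \<Rightarrow> nat \<Rightarrow> nat list \<Rightarrow> vec" where
  "s_b k l a i j =
     (if ent i a = ent i (a+1) then sgn_p k l (ent i a) * bvec i j
      else sgn_pp k l (ent i a) (ent i (a+1)) * bvec (swp i a) j)"

definition T_b :: "(nat \<Rightarrow> nat) \<Rightarrow> (nat \<Rightarrow> nat) \<Rightarrow> nat \<Rightarrow> nat list \<Rightarrow> vec" where
  "T_b k l a i j =
     (if ent i a < ent i (a+1) then
        (qq - inverse qq) * bvec i j + sgn_pp k l (ent i a) (ent i (a+1)) * bvec (swp i a) j
      else if ent i a = ent i (a+1) then
        ((qq - inverse qq) + sgn_p k l (ent i a) * (qq + inverse qq)) / 2 * bvec i j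
      else sgn_pp k l (ent i a) (ent i (a+1)) * bvec (swp i a) j)"

definition S_b :: "(nat \<Rightarrow> nat) \<Rightarrow> (nat \<Rightarrow> nat) \<Rightarrow> nat \<Rightarrow> nat list \<Rightarrow> vec" where
  "S_b k l a i = (if col k l (ent i a) = col k l (ent i (a+1)) then T_b k l a i else s_b k l a i)"

definition lin :: "nat \<Rightarrow> nat \<Rightarrow> (nat list \<Rightarrow> vec) \<Rightarrow> vec \<Rightarrow> vec" where
  "lin N n f v = (\<lambda>j. \<Sum>i\<in>tuples N n. v i * f i j)"

definition T_op :: "nat \<Rightarrow> (nat \<Rightarrow> nat) \<Rightarrow> (nat \<Rightarrow> nat) \<Rightarrow> nat \<Rightarrow> nat \<Rightarrow> vec \<Rightarrow> vec" where
  "T_op m k l n a = lin (dimN m k l) n (T_b k l a)"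

definition S_op :: "nat \<Rightarrow> (nat \<Rightarrow> nat) \<Rightarrow> (nat \<Rightarrow> nat) \<Rightarrow> nat \<Rightarrow> nat \<Rightarrow> vec \<Rightarrow> vec" where
  "S_op m k l n a = lin (dimN m k l) n (S_b k l a)"

definition Tinv_op :: "nat \<Rightarrow> (nat \<Rightarrow> nat) \<Rightarrow> (nat \<Rightarrow> nat) \<Rightarrow> nat \<Rightarrow> nat \<Rightarrow> vec \<Rightarrow> vec" where
  "Tinv_op m k l n a = inv_into (vecs (dimN m k l) n) (T_op m k l n a)"

definition Vjp :: "nat \<Rightarrow> (nat \<Rightarrow> nat) \<Rightarrow> (nat \<Rightarrow> nat) \<Rightarrow> nat \<Rightarrow> nat \<Rightarrow> nat \<Rightarrow> vec set" where
  "Vjp m k l n j p = {v \<in> vecs (dimN m k l) n. \<forall>i. v i \<noteq> 0 \<longrightarrow> col k l (ent i p) \<ge> j}"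

end

theory Submission
  imports Defs "HOL-Library.Function_Algebras"
begin

(* Put W_b = S_{b-1} ... S_p(i) and U_b = T_p^{-1} ... T_{b-1}^{-1}, so the claim is
   U_n W_n - i \<in> V_{j+1,p}.  S_a(x) involves x s_a and, only if positions a and a+1 of x have
   the same colour, x itself; so the colour in position a moves to position a+1, and W_b is
   supported on tuples whose b-th colour is c = c_p(i).  On a basis tuple x, T_a^{-1} S_a(x) - x
   vanishes unless c_a(x) < c_{a+1}(x), and then it is a multiple of x s_a, whose a-th colour
   exceeds c_a(x).  Thus U_{b+1} W_{b+1} - U_b W_b = U_b (T_b^{-1} S_b W_b - W_b) is U_b applied
   to a vector whose b-th colour exceeds c.  Finally T_a^{-1} sends x to a combination of x s_a
   and (only when x_{a+1} <= x_a) of x itself, so it turns "(a+1)-th colour > c" into "a-th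
   colour > c", and U_b lands in "p-th colour > c".  Telescoping over b gives the theorem, as c >= j. *)

lemma two_neq_zero_K: "(2::K) \<noteq> 0"
proof
  assume "(2::K) = 0"
  then have "Fract (2::complex poly) 1 = Fract 0 1"
    by (metis Zero_fract_def of_nat_fract of_nat_numeral)
  then show False by (simp add: eq_fract)
qed

lemma qq_neq_zero: "qq \<noteq> 0"
  by (simp add: qq_def Zero_fract_def eq_fract)

lemma finite_tuples: "finite (tuples N n)"
proof (rule finite_subset)
  show "tuples N n \<subseteq> {xs. set xs \<subseteq> {1..N} \<and> length xs = n}"
    by (auto simp: tuples_def)
qed (simp add: finite_lists_length_eq)

lemma ent_le_dim: "x \<in> tuples N n \<Longrightarrow> 1 \<le> a \<Longrightarrow> a \<le> n \<Longrightarrow> ent x a \<le> N"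
  by (simp add: tuples_def ent_def)

lemma length_swp [simp]: "length (swp i a) = length i"
  by (simp add: swp_def)

lemma ent_swp_left: "1 \<le> a \<Longrightarrow> a < length i \<Longrightarrow> ent (swp i a) a = ent i (a+1)"
  by (simp add: swp_def ent_def nth_list_update)

lemma ent_swp_right: "1 \<le> a \<Longrightarrow> a < length i \<Longrightarrow> ent (swp i a) (Suc a) = ent i a"
  by (simp add: swp_def ent_def nth_list_update)

lemma swp_swp: "1 \<le> a \<Longrightarrow> a < length i \<Longrightarrow> swp (swp i a) a = i"
  by (rule nth_equalityI) (auto simp: swp_def nth_list_update)

lemma swp_neq: "1 \<le> a \<Longrightarrow> a < length i \<Longrightarrow> ent i a \<noteq> ent i (a+1) \<Longrightarrow> swp i a \<noteq> i"
  by (metis ent_swp_left)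

lemma swp_tuples: "1 \<le> a \<Longrightarrow> a < n \<Longrightarrow> i \<in> tuples N n \<Longrightarrow> swp i a \<in> tuples N n"
  unfolding tuples_def swp_def
  by (auto dest!: set_update_subset_insert[THEN subsetD] simp: set_update_subset_insert)

lemma lin_bvec: "y \<in> tuples N n \<Longrightarrow> lin N n f (bvec y) = f y"
  unfolding lin_def bvec_def
  by (simp add: if_distrib[where f="\<lambda>x. x * _"] sum.If_cases finite_tuples)

lemma lin_add: "lin N n f (v + w) = lin N n f v + lin N n f w"
  by (simp add: lin_def fun_eq_iff sum.distrib distrib_right)

lemma lin_diff: "lin N n f (v - w) = lin N n f v - lin N n f w"
  by (simp add: lin_def fun_eq_iff sum_subtractf left_diff_distrib)

lemma lin_smult: "lin N n f (\<lambda>j. c * v j) = (\<lambda>j. c * lin N n f v j)"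
  by (simp add: lin_def sum_distrib_left mult.assoc)

lemma lin_diff_fun: "lin N n (\<lambda>x. f x - g x) v = lin N n f v - lin N n g v"
  by (simp add: lin_def fun_eq_iff sum_subtractf right_diff_distrib)

lemma lin_cong: "(\<And>x. x \<in> tuples N n \<Longrightarrow> f x = g x) \<Longrightarrow> lin N n f v = lin N n g v"
  by (simp add: lin_def)

lemma lin_comp: "lin N n g (lin N n f v) = lin N n (\<lambda>x. lin N n g (f x)) v"
proof
  fix j
  have "lin N n g (lin N n f v) j = (\<Sum>y\<in>tuples N n. \<Sum>x\<in>tuples N n. v x * f x y * g y j)"
    by (simp add: lin_def sum_distrib_right)
  also have "\<dots> = (\<Sum>x\<in>tuples N n. \<Sum>y\<in>tuples N n. v x * f x y * g y j)"
    by (rule sum.swap)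
  also have "\<dots> = lin N n (\<lambda>x. lin N n g (f x)) v j"
    by (simp add: lin_def sum_distrib_left mult.assoc)
  finally show "lin N n g (lin N n f v) j = lin N n (\<lambda>x. lin N n g (f x)) v j" .
qed

lemma lin_bvec_id: "v \<in> vecs N n \<Longrightarrow> lin N n bvec v = v"
  unfolding vecs_def lin_def bvec_def
  by (auto simp: fun_eq_iff if_distrib[where f="\<lambda>x. _ * x"] sum.If_cases finite_tuples
      Int_insert_right)

definition vecs_on :: "nat \<Rightarrow> nat \<Rightarrow> (nat list \<Rightarrow> bool) \<Rightarrow> vec set" where
  "vecs_on N n P = {v \<in> vecs N n. \<forall>i. v i \<noteq> 0 \<longrightarrow> P i}"

lemma vecs_on_True: "vecs_on N n (\<lambda>_. True) = vecs N n"
  by (simp add: vecs_on_def)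

lemma vecs_on_add: "u \<in> vecs_on N n P \<Longrightarrow> w \<in> vecs_on N n P \<Longrightarrow> u + w \<in> vecs_on N n P"
  by (auto simp: vecs_on_def vecs_def) (metis add.right_neutral)

lemma vecs_on_mono: "v \<in> vecs_on N n P \<Longrightarrow> (\<And>i. P i \<Longrightarrow> Q i) \<Longrightarrow> v \<in> vecs_on N n Q"
  by (auto simp: vecs_on_def)

lemma Vjp_eq_vecs_on: "Vjp m k l n j p = vecs_on (dimN m k l) n (\<lambda>x. j \<le> col k l (ent x p))"
  by (simp add: Vjp_def vecs_on_def)

lemma bvec_vecs_on: "i \<in> tuples N n \<Longrightarrow> P i \<Longrightarrow> bvec i \<in> vecs_on N n P"
  by (simp add: vecs_on_def vecs_def bvec_def)

lemma lin_vecs_on: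
  assumes "v \<in> vecs_on N n P" and "\<And>x. x \<in> tuples N n \<Longrightarrow> P x \<Longrightarrow> f x \<in> vecs_on N n Q"
  shows "lin N n f v \<in> vecs_on N n Q"
  using assms unfolding vecs_on_def vecs_def lin_def
  by (auto intro!: sum.neutral)

lemma sgn_pp_swap: "sgn_pp k l x y * sgn_pp k l y x = 1"
  by (auto simp: sgn_pp_def)

lemma T_b_less: "ent x a < ent x (a+1) \<Longrightarrow> T_b k l a x =
    (\<lambda>j. (qq - inverse qq) * bvec x j) + (\<lambda>j. sgn_pp k l (ent x a) (ent x (a+1)) * bvec (swp x a) j)"
  by (simp add: T_b_def fun_eq_iff)

lemma T_b_diag: "ent x a = ent x (a+1) \<Longrightarrow> T_b k l a x =
    (\<lambda>j. (if odd_par k l (ent x a) then - inverse qq else qq) * bvec x j)"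
  using two_neq_zero_K by (simp add: T_b_def sgn_p_def fun_eq_iff)

lemma T_b_greater: "ent x (a+1) < ent x a \<Longrightarrow> T_b k l a x =
    (\<lambda>j. sgn_pp k l (ent x a) (ent x (a+1)) * bvec (swp x a) j)"
  by (simp add: T_b_def fun_eq_iff)

definition Tinv_b :: "(nat \<Rightarrow> nat) \<Rightarrow> (nat \<Rightarrow> nat) \<Rightarrow> nat \<Rightarrow> nat list \<Rightarrow> vec" where
  "Tinv_b k l a i j =
     (if ent i a < ent i (a+1) then sgn_pp k l (ent i a) (ent i (a+1)) * bvec (swp i a) j
      else if ent i a = ent i (a+1) then (if odd_par k l (ent i a) then - qq else inverse qq) * bvec i j
      else sgn_pp k l (ent i a) (ent i (a+1)) * bvec (swp i a) j - (qq - inverse qq) * bvec i j)"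

lemma Tinv_b_less: "ent x a < ent x (a+1) \<Longrightarrow> Tinv_b k l a x =
    (\<lambda>j. sgn_pp k l (ent x a) (ent x (a+1)) * bvec (swp x a) j)"
  by (simp add: Tinv_b_def fun_eq_iff)

lemma Tinv_b_diag: "ent x a = ent x (a+1) \<Longrightarrow> Tinv_b k l a x =
    (\<lambda>j. (if odd_par k l (ent x a) then - qq else inverse qq) * bvec x j)"
  by (simp add: Tinv_b_def fun_eq_iff)

lemma Tinv_b_greater: "ent x (a+1) < ent x a \<Longrightarrow> Tinv_b k l a x =
    (\<lambda>j. sgn_pp k l (ent x a) (ent x (a+1)) * bvec (swp x a) j) - (\<lambda>j. (qq - inverse qq) * bvec x j)"
  by (simp add: Tinv_b_def fun_eq_iff)

lemma T_b_Tinv_b: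
  assumes x: "x \<in> tuples N n" and a: "1 \<le> a" "a < n"
  shows "lin N n (T_b k l a) (Tinv_b k l a x) = bvec x"
proof -
  have len: "a < length x" using x a by (simp add: tuples_def)
  have sx: "swp x a \<in> tuples N n" using swp_tuples x a by blast
  note swp = ent_swp_left[OF a(1) len] ent_swp_right[OF a(1) len] swp_swp[OF a(1) len]
  consider "ent x a < ent x (a+1)" | "ent x a = ent x (a+1)" | "ent x (a+1) < ent x a"
    by linarith
  then show ?thesis
  proof cases
    case 1
    then show ?thesis
      using sgn_pp_swap[of k l "ent x a" "ent x (a+1)"]
      by (simp add: Tinv_b_less lin_smult lin_bvec sx T_b_greater swp mult.assoc[symmetric])
  next
    case 2
    then show ?thesis
      using qq_neq_zero by (simp add: Tinv_b_diag T_b_diag lin_smult lin_bvec x fun_eq_iff)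
  next
    case 3
    let ?\<epsilon> = "sgn_pp k l (ent x a) (ent x (a+1))"
    have "lin N n (T_b k l a) (Tinv_b k l a x)
        = (\<lambda>j. ?\<epsilon> * T_b k l a (swp x a) j) - (\<lambda>j. (qq - inverse qq) * T_b k l a x j)"
      using 3 by (simp add: Tinv_b_greater lin_diff lin_smult lin_bvec sx x)
    also have "\<dots> = bvec x"
    proof -
      have T_swp: "T_b k l a (swp x a) = (\<lambda>j. (qq - inverse qq) * bvec (swp x a) j)
          + (\<lambda>j. sgn_pp k l (ent x (a+1)) (ent x a) * bvec x j)"
        using 3 T_b_less[of "swp x a" a k l] by (simp add: swp)
      show ?thesis
        using 3 sgn_pp_swap[of k l "ent x a" "ent x (a+1)"] swp_neq[OF a(1) len]
        by (simp add: T_swp T_b_greater fun_eq_iff bvec_def algebra_simps)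
    qed
    finally show ?thesis .
  qed
qed

lemma Tinv_b_T_b:
  assumes x: "x \<in> tuples N n" and a: "1 \<le> a" "a < n"
  shows "lin N n (Tinv_b k l a) (T_b k l a x) = bvec x"
proof -
  have len: "a < length x" using x a by (simp add: tuples_def)
  have sx: "swp x a \<in> tuples N n" using swp_tuples x a by blast
  note swp = ent_swp_left[OF a(1) len] ent_swp_right[OF a(1) len] swp_swp[OF a(1) len]
  consider "ent x a < ent x (a+1)" | "ent x a = ent x (a+1)" | "ent x (a+1) < ent x a"
    by linarith
  then show ?thesis
  proof cases
    case 1
    let ?\<epsilon> = "sgn_pp k l (ent x a) (ent x (a+1))"
    have "lin N n (Tinv_b k l a) (T_b k l a x)
        = (\<lambda>j. (qq - inverse qq) * Tinv_b k l a x j) + (\<lambda>j. ?\<epsilon> * Tinv_b k l a (swp x a) j)"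
      using 1 by (simp add: T_b_less lin_add lin_smult lin_bvec sx x)
    also have "\<dots> = bvec x"
    proof -
      have Tinv_swp: "Tinv_b k l a (swp x a) = (\<lambda>j. sgn_pp k l (ent x (a+1)) (ent x a) * bvec x j)
          - (\<lambda>j. (qq - inverse qq) * bvec (swp x a) j)"
        using 1 Tinv_b_greater[of "swp x a" a k l] by (simp add: swp)
      show ?thesis
        using 1 sgn_pp_swap[of k l "ent x a" "ent x (a+1)"] swp_neq[OF a(1) len]
        by (simp add: Tinv_swp Tinv_b_less fun_eq_iff bvec_def algebra_simps)
    qed
    finally show ?thesis .
  next
    case 2
    then show ?thesis
      using qq_neq_zero by (simp add: Tinv_b_diag T_b_diag lin_smult lin_bvec x fun_eq_iff)
  next
    case 3
    then show ?thesis
      using sgn_pp_swap[of k l "ent x a" "ent x (a+1)"]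
      by (simp add: T_b_greater lin_smult lin_bvec sx Tinv_b_less swp mult.assoc[symmetric])
  qed
qed

lemma Tinv_b_vecs_on:
  "x \<in> tuples N n \<Longrightarrow> 1 \<le> a \<Longrightarrow> a < n \<Longrightarrow>
    Tinv_b k l a x \<in> vecs_on N n (\<lambda>y. y = swp x a \<or> y = x \<and> ent x (a+1) \<le> ent x a)"
  using swp_tuples by (auto simp: vecs_on_def vecs_def Tinv_b_def bvec_def)

definition Tinv_lin :: "nat \<Rightarrow> (nat \<Rightarrow> nat) \<Rightarrow> (nat \<Rightarrow> nat) \<Rightarrow> nat \<Rightarrow> nat \<Rightarrow> vec \<Rightarrow> vec" where
  "Tinv_lin m k l n a = lin (dimN m k l) n (Tinv_b k l a)"

lemma Tinv_lin_vecs: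
  assumes "v \<in> vecs (dimN m k l) n" "1 \<le> a" "a < n"
  shows "Tinv_lin m k l n a v \<in> vecs (dimN m k l) n"
proof -
  have "Tinv_lin m k l n a v \<in> vecs_on (dimN m k l) n (\<lambda>_. True)"
    unfolding Tinv_lin_def
  proof (rule lin_vecs_on[where P = "\<lambda>_. True"])
    show "v \<in> vecs_on (dimN m k l) n (\<lambda>_. True)" using assms(1) by (simp add: vecs_on_True)
    show "Tinv_b k l a x \<in> vecs_on (dimN m k l) n (\<lambda>_. True)" if "x \<in> tuples (dimN m k l) n" for x
      using Tinv_b_vecs_on[OF that assms(2,3)] by (rule vecs_on_mono) simp
  qed
  then show ?thesis by (simp add: vecs_on_True)
qed

lemma Tinv_op_eq_Tinv_lin:
  assumes v: "v \<in> vecs (dimN m k l) n" and a: "1 \<le> a" "a < n"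
  shows "Tinv_op m k l n a v = Tinv_lin m k l n a v"
proof -
  let ?N = "dimN m k l"
  have left_inverse: "Tinv_lin m k l n a (T_op m k l n a w) = w" if "w \<in> vecs ?N n" for w
  proof -
    have "Tinv_lin m k l n a (T_op m k l n a w) = lin ?N n (\<lambda>x. lin ?N n (Tinv_b k l a) (T_b k l a x)) w"
      by (simp add: Tinv_lin_def T_op_def lin_comp)
    also have "\<dots> = lin ?N n bvec w" by (rule lin_cong) (rule Tinv_b_T_b[OF _ a])
    also have "\<dots> = w" by (rule lin_bvec_id[OF that])
    finally show ?thesis .
  qed
  have right_inverse: "T_op m k l n a (Tinv_lin m k l n a v) = v"
  proof -
    have "T_op m k l n a (Tinv_lin m k l n a v) = lin ?N n (\<lambda>x. lin ?N n (T_b k l a) (Tinv_b k l a x)) v"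
      by (simp add: Tinv_lin_def T_op_def lin_comp)
    also have "\<dots> = lin ?N n bvec v" by (rule lin_cong) (rule T_b_Tinv_b[OF _ a])
    also have "\<dots> = v" by (rule lin_bvec_id[OF v])
    finally show ?thesis .
  qed
  have "inj_on (T_op m k l n a) (vecs ?N n)"
    by (metis inj_onI left_inverse)
  then show ?thesis
    unfolding Tinv_op_def using Tinv_lin_vecs[OF v a] right_inverse by (metis inv_into_f_f)
qed

lemma fold_Tinv_op_eq_fold_Tinv_lin:
  "\<forall>a\<in>set as. 1 \<le> a \<and> a < n \<Longrightarrow> v \<in> vecs (dimN m k l) n \<Longrightarrow>
    fold (Tinv_op m k l n) as v = fold (Tinv_lin m k l n) as v"
  by (induction as arbitrary: v) (simp_all add: Tinv_op_eq_Tinv_lin Tinv_lin_vecs)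

lemma col_mono:
  assumes "x \<le> y" "y \<le> dimN m k l"
  shows "col k l x \<le> col k l y"
proof -
  have "y \<le> (\<Sum>c'=1..m. k c' + l c')" using assms by (simp add: dimN_def)
  then have "y \<le> (\<Sum>c'=1..col k l y. k c' + l c')"
    unfolding col_def by (rule LeastI)
  then have "x \<le> (\<Sum>c'=1..col k l y. k c' + l c')" using assms by simp
  then show ?thesis unfolding col_def by (rule Least_le)
qed

lemma col_less_imp_less: "col k l x < col k l y \<Longrightarrow> x \<le> dimN m k l \<Longrightarrow> x < y"
  using col_mono[of y x m k l] by (meson leD linorder_le_less_linear)

lemma S_b_vecs_on:
  "x \<in> tuples N n \<Longrightarrow> 1 \<le> a \<Longrightarrow> a < n \<Longrightarrow> S_b k l a x
    \<in> vecs_on N n (\<lambda>y. y = swp x a \<or> y = x \<and> col k l (ent x a) = col k l (ent x (a+1)))"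
  using swp_tuples by (auto simp: vecs_on_def vecs_def S_b_def s_b_def T_b_def bvec_def)

lemma S_b_eq_T_b:
  assumes x: "x \<in> tuples (dimN m k l) n" and a: "1 \<le> a" "a < n"
    and "\<not> col k l (ent x a) < col k l (ent x (a+1))"
  shows "S_b k l a x = T_b k l a x"
proof (cases "col k l (ent x a) = col k l (ent x (a+1))")
  case False
  with assms have "col k l (ent x (a+1)) < col k l (ent x a)" by linarith
  then have "ent x (a+1) < ent x a"
    using ent_le_dim[OF x, of "a+1"] a by (simp add: col_less_imp_less)
  then show ?thesis by (simp add: S_b_def s_b_def T_b_greater fun_eq_iff)
qed (simp add: S_b_def)

lemma S_b_col_less:
  assumes x: "x \<in> tuples (dimN m k l) n" and a: "1 \<le> a" "a < n"
    and col: "col k l (ent x a) < col k l (ent x (a+1))"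
  shows "S_b k l a x = (\<lambda>j. sgn_pp k l (ent x a) (ent x (a+1)) * bvec (swp x a) j)"
proof -
  have "ent x a < ent x (a+1)"
    using col_less_imp_less[OF col] ent_le_dim[OF x a(1)] a by simp
  then show ?thesis using col by (simp add: S_b_def s_b_def fun_eq_iff)
qed

lemma S_op_transports_colour:
  assumes "v \<in> vecs_on (dimN m k l) n (\<lambda>x. col k l (ent x a) = c)" "1 \<le> a" "a < n"
  shows "S_op m k l n a v \<in> vecs_on (dimN m k l) n (\<lambda>x. col k l (ent x (Suc a)) = c)"
  unfolding S_op_def
proof (rule lin_vecs_on[OF assms(1)])
  fix x assume x: "x \<in> tuples (dimN m k l) n" and col: "col k l (ent x a) = c"
  have len: "a < length x" using x assms by (simp add: tuples_def)
  show "S_b k l a x \<in> vecs_on (dimN m k l) n (\<lambda>x. col k l (ent x (Suc a)) = c)"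
    using S_b_vecs_on[OF x assms(2,3)]
    by (rule vecs_on_mono) (use col ent_swp_right[OF assms(2) len] in auto)
qed

lemma fold_S_op_colour:
  assumes i: "i \<in> tuples (dimN m k l) n" and "1 \<le> p" "p \<le> b" "b \<le> n"
  shows "fold (S_op m k l n) [p..<b] (bvec i)
    \<in> vecs_on (dimN m k l) n (\<lambda>x. col k l (ent x b) = col k l (ent i p))"
  using assms(3,4)
proof (induction b rule: dec_induct)
  case base
  then show ?case using i by (simp add: bvec_vecs_on)
next
  case (step b)
  then show ?case using assms(2) by (simp add: S_op_transports_colour)
qed

lemma Tinv_lin_transports_colour:
  assumes "v \<in> vecs_on (dimN m k l) n (\<lambda>x. c < col k l (ent x (Suc a)))" "1 \<le> a" "a < n"
  shows "Tinv_lin m k l n a v \<in> vecs_on (dimN m k l) n (\<lambda>x. c < col k l (ent x a))"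
  unfolding Tinv_lin_def
proof (rule lin_vecs_on[OF assms(1)])
  fix x assume x: "x \<in> tuples (dimN m k l) n" and col: "c < col k l (ent x (Suc a))"
  have len: "a < length x" using x assms by (simp add: tuples_def)
  have col_le: "col k l (ent x (Suc a)) \<le> col k l (ent x a)" if "ent x (Suc a) \<le> ent x a"
    using col_mono[OF that ent_le_dim[OF x assms(2)]] assms by simp
  show "Tinv_b k l a x \<in> vecs_on (dimN m k l) n (\<lambda>x. c < col k l (ent x a))"
    using Tinv_b_vecs_on[OF x assms(2,3)]
    by (rule vecs_on_mono) (use col col_le ent_swp_left[OF assms(2) len] in auto)
qed

lemma fold_Tinv_lin_colour:
  assumes "v \<in> vecs_on (dimN m k l) n (\<lambda>x. c < col k l (ent x b))" "1 \<le> p" "p \<le> b" "b \<le> n"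
  shows "fold (Tinv_lin m k l n) (rev [p..<b]) v \<in> vecs_on (dimN m k l) n (\<lambda>x. c < col k l (ent x p))"
  using assms(3,4,1)
proof (induction b arbitrary: v rule: dec_induct)
  case base
  then show ?case by simp
next
  case (step b)
  then show ?case using assms(2) by (simp add: Tinv_lin_transports_colour)
qed

lemma Tinv_lin_S_b_minus_bvec:
  assumes x: "x \<in> tuples (dimN m k l) n" and a: "1 \<le> a" "a < n"
  shows "Tinv_lin m k l n a (S_b k l a x) - bvec x
    \<in> vecs_on (dimN m k l) n (\<lambda>y. col k l (ent x a) < col k l (ent y a))"
proof (cases "col k l (ent x a) < col k l (ent x (a+1))")
  case False
  then show ?thesis
    by (simp add: S_b_eq_T_b[OF x a] Tinv_lin_def Tinv_b_T_b[OF x a] vecs_on_def vecs_def)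
next
  case True
  let ?\<epsilon> = "sgn_pp k l (ent x a) (ent x (a+1))"
  have len: "a < length x" using x a by (simp add: tuples_def)
  have sx: "swp x a \<in> tuples (dimN m k l) n" using swp_tuples x a by blast
  note swp = ent_swp_left[OF a(1) len] ent_swp_right[OF a(1) len] swp_swp[OF a(1) len]
  have "ent x a < ent x (a+1)"
    using col_less_imp_less[OF True] ent_le_dim[OF x a(1)] a by simp
  then have Tinv_swp: "Tinv_b k l a (swp x a) = (\<lambda>j. sgn_pp k l (ent x (a+1)) (ent x a) * bvec x j)
      - (\<lambda>j. (qq - inverse qq) * bvec (swp x a) j)"
    using Tinv_b_greater[of "swp x a" a k l] by (simp add: swp)
  have "Tinv_lin m k l n a (S_b k l a x) = (\<lambda>j. ?\<epsilon> * Tinv_b k l a (swp x a) j)"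
    by (simp add: S_b_col_less[OF x a True] Tinv_lin_def lin_smult lin_bvec sx)
  then have "Tinv_lin m k l n a (S_b k l a x) - bvec x = (\<lambda>j. - ?\<epsilon> * (qq - inverse qq) * bvec (swp x a) j)"
    using sgn_pp_swap[of k l "ent x a" "ent x (a+1)"]
    by (simp add: Tinv_swp fun_eq_iff algebra_simps)
  also have "\<dots> \<in> vecs_on (dimN m k l) n (\<lambda>y. col k l (ent x a) < col k l (ent y a))"
    using sx True by (simp add: vecs_on_def vecs_def bvec_def swp)
  finally show ?thesis .
qed

lemma Tinv_lin_S_op_minus_id:
  assumes v: "v \<in> vecs_on (dimN m k l) n (\<lambda>x. col k l (ent x a) = c)" and a: "1 \<le> a" "a < n"
  shows "Tinv_lin m k l n a (S_op m k l n a v) - v \<in> vecs_on (dimN m k l) n (\<lambda>y. c < col k l (ent y a))"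
proof -
  let ?N = "dimN m k l"
  have "v \<in> vecs ?N n" using v by (simp add: vecs_on_def)
  then have "Tinv_lin m k l n a (S_op m k l n a v) - v
      = lin ?N n (\<lambda>x. Tinv_lin m k l n a (S_b k l a x) - bvec x) v"
    by (simp add: Tinv_lin_def S_op_def lin_comp lin_diff_fun lin_bvec_id)
  also have "\<dots> \<in> vecs_on ?N n (\<lambda>y. c < col k l (ent y a))"
  proof (rule lin_vecs_on[OF v])
    fix x assume "x \<in> tuples ?N n" and "col k l (ent x a) = c"
    then show "Tinv_lin m k l n a (S_b k l a x) - bvec x \<in> vecs_on ?N n (\<lambda>y. c < col k l (ent y a))"
      using Tinv_lin_S_b_minus_bvec[OF _ a] by blast
  qed
  finally show ?thesis .
qed

lemma fold_Tinv_lin_diff: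
  "fold (Tinv_lin m k l n) as (v - w) = fold (Tinv_lin m k l n) as v - fold (Tinv_lin m k l n) as w"
  by (induction as arbitrary: v w) (simp_all add: Tinv_lin_def lin_diff)

lemma fold_Tinv_lin_fold_S_op_minus_id:
  assumes i: "i \<in> tuples (dimN m k l) n" and p: "1 \<le> p" and b: "p \<le> b" "b \<le> n"
  shows "fold (Tinv_lin m k l n) (rev [p..<b]) (fold (S_op m k l n) [p..<b] (bvec i)) - bvec i
    \<in> vecs_on (dimN m k l) n (\<lambda>y. col k l (ent i p) < col k l (ent y p))"
  using b(1)
proof (induction b rule: dec_induct)
  case base
  then show ?case by (simp add: vecs_on_def vecs_def)
next
  case (step c)
  let ?U = "fold (Tinv_lin m k l n) (rev [p..<c])"
  let ?W = "fold (S_op m k l n) [p..<c] (bvec i)"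
  let ?V = "vecs_on (dimN m k l) n (\<lambda>y. col k l (ent i p) < col k l (ent y p))"
  have c: "p \<le> c" "c < n" using step b by auto
  have "Tinv_lin m k l n c (S_op m k l n c ?W) - ?W
      \<in> vecs_on (dimN m k l) n (\<lambda>y. col k l (ent i p) < col k l (ent y c))"
    using fold_S_op_colour[OF i p] c p by (simp add: Tinv_lin_S_op_minus_id)
  then have "?U (Tinv_lin m k l n c (S_op m k l n c ?W) - ?W) \<in> ?V"
    by (rule fold_Tinv_lin_colour[OF _ p c(1) less_imp_le[OF c(2)]])
  then have "?U (Tinv_lin m k l n c (S_op m k l n c ?W)) - ?U ?W \<in> ?V"
    by (simp only: fold_Tinv_lin_diff)
  then have "(?U (Tinv_lin m k l n c (S_op m k l n c ?W)) - ?U ?W) + (?U ?W - bvec i) \<in> ?V"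
    using step.IH by (rule vecs_on_add)
  moreover have "fold (Tinv_lin m k l n) (rev [p..<Suc c]) (fold (S_op m k l n) [p..<Suc c] (bvec i))
      = ?U (Tinv_lin m k l n c (S_op m k l n c ?W))"
    using c by simp
  moreover have "(X - Y) + (Y - Z) = X - Z" for X Y Z :: vec
    by simp
  ultimately show ?case by metis
qed

theorem mainTheorem2:
  fixes m n :: nat and k l :: "nat \<Rightarrow> nat" and j p :: nat and i :: "nat list"
  assumes "m \<ge> 1" and "n \<ge> 1" and "dimN m k l > 0"
    and "j \<ge> 1" and "1 \<le> p" and "p \<le> n - 1"
    and "i \<in> tuples (dimN m k l) n"
    and "bvec i \<in> Vjp m k l n j p"
  shows "fold (\<lambda>a w. Tinv_op m k l n a w) (rev [p..<n])
           (fold (\<lambda>a w. S_op m k l n a w) [p..<n] (bvec i)) - bvec i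
         \<in> Vjp m k l n (j + 1) p"
proof -
  have p: "1 \<le> p" "p < n" using assms(2,5,6) by auto
  have j: "j \<le> col k l (ent i p)"
    using assms(8) by (auto simp: Vjp_def bvec_def)
  have "fold (S_op m k l n) [p..<n] (bvec i) \<in> vecs (dimN m k l) n"
    using fold_S_op_colour[OF assms(7) p(1) _ order.refl] p by (simp add: vecs_on_def)
  then have "fold (Tinv_op m k l n) (rev [p..<n]) (fold (S_op m k l n) [p..<n] (bvec i))
      = fold (Tinv_lin m k l n) (rev [p..<n]) (fold (S_op m k l n) [p..<n] (bvec i))"
    using p by (intro fold_Tinv_op_eq_fold_Tinv_lin) auto
  moreover have "fold (Tinv_lin m k l n) (rev [p..<n]) (fold (S_op m k l n) [p..<n] (bvec i)) - bvec i
      \<in> vecs_on (dimN m k l) n (\<lambda>y. j + 1 \<le> col k l (ent y p))"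
    using fold_Tinv_lin_fold_S_op_minus_id[OF assms(7) p(1) less_imp_le[OF p(2)] order.refl]
    by (rule vecs_on_mono) (use j in simp)
  ultimately show ?thesis by (simp only: Vjp_eq_vecs_on)
qed

end
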